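(* Let $\mathbb D$ be the open unit disc in $\mathbb C$, $\alpha\ge 0$, and $d\mu(z)=(1-|z|^2)^\alpha\,d\lambda(z)$. Then the canonical solution operator $S:A^2(\mathbb D,d\mu)\to L^2(\mathbb D,d\mu)$ to $\overline\partial$ is a Hilbert–Schmidt operator.
   Context: $d\lambda$ is Lebesgue measure; $A^2(\mathbb D,d\mu)$ is the space of holomorphic functions $g$ on $\mathbb D$ with $\int_{\mathbb D}|g|^2d\mu<\infty$. The canonical solution operator $S$ assigns to $g\in A^2(\mathbb D,d\mu)$ the unique $u\in L^2(\mathbb D,d\mu)$ with $\overline\partial u=g$ and $u\perp A^2(\mathbb D,d\mu)$; equivalently $S(g)=\overline z g-P(\overline z g)$ with $P$ the orthogonal projection of $L^2(\mathbb D,d\mu)$ onto $A^2(\mathbb D,d\mu)$. *)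

theory Defs
  imports "HOL-Analysis.Analysis" "HOL-Complex_Analysis.Complex_Analysis"
begin

definition disc :: "complex set" where
  "disc = ball 0 1"

definition wmeasure :: "real \<Rightarrow> complex measure" where
  "wmeasure \<alpha> = density lborel
     (\<lambda>z. ennreal (indicator disc z * (1 - (cmod z)^2) powr \<alpha>))"

definition L2 :: "real \<Rightarrow> (complex \<Rightarrow> complex) \<Rightarrow> bool" where
  "L2 \<alpha> f \<longleftrightarrow> f \<in> borel_measurable (wmeasure \<alpha>) \<and>
      integrable (wmeasure \<alpha>) (\<lambda>z. (cmod (f z))^2)"

definition l2_inner :: "real \<Rightarrow> (complex \<Rightarrow> complex) \<Rightarrow> (complex \<Rightarrow> complex) \<Rightarrow> complex" where
  "l2_inner \<alpha> f g = (LINT z|wmeasure \<alpha>. f z * cnj (g z))"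

definition l2_norm :: "real \<Rightarrow> (complex \<Rightarrow> complex) \<Rightarrow> real" where
  "l2_norm \<alpha> f = sqrt (LINT z|wmeasure \<alpha>. (cmod (f z))^2)"

text \<open>The Bergman space A^2(D, d mu). Convention: functions are normalised to be
  0 outside the disc, so that elements are determined by their values on D.\<close>
definition A2 :: "real \<Rightarrow> (complex \<Rightarrow> complex) set" where
  "A2 \<alpha> = {g. g holomorphic_on disc \<and> (\<forall>z. z \<notin> disc \<longrightarrow> g z = 0) \<and> L2 \<alpha> g}"

definition bergman_proj :: "real \<Rightarrow> (complex \<Rightarrow> complex) \<Rightarrow> (complex \<Rightarrow> complex)" where
  "bergman_proj \<alpha> f = (THE p. p \<in> A2 \<alpha> \<and>
      (\<forall>h\<in>A2 \<alpha>. l2_inner \<alpha> (\<lambda>z. f z - p z) h = 0))"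

definition canonical_solution :: "real \<Rightarrow> (complex \<Rightarrow> complex) \<Rightarrow> (complex \<Rightarrow> complex)" where
  "canonical_solution \<alpha> g =
     (\<lambda>z. cnj z * g z - bergman_proj \<alpha> (\<lambda>w. cnj w * g w) z)"

definition orthonormal_basis_A2 :: "real \<Rightarrow> (nat \<Rightarrow> complex \<Rightarrow> complex) \<Rightarrow> bool" where
  "orthonormal_basis_A2 \<alpha> e \<longleftrightarrow>
     (\<forall>n. e n \<in> A2 \<alpha>) \<and>
     (\<forall>m n. l2_inner \<alpha> (e m) (e n) = (if m = n then 1 else 0)) \<and>
     (\<forall>f\<in>A2 \<alpha>. (\<forall>n. l2_inner \<alpha> f (e n) = 0) \<longrightarrow> (\<forall>z. f z = 0))"

definition hilbert_schmidt_on_A2 :: "real \<Rightarrow> ((complex \<Rightarrow> complex) \<Rightarrow> (complex \<Rightarrow> complex)) \<Rightarrow> bool" where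
  "hilbert_schmidt_on_A2 \<alpha> T \<longleftrightarrow>
     (\<exists>e. orthonormal_basis_A2 \<alpha> e \<and> (\<forall>n. L2 \<alpha> (T (e n))) \<and>
          summable (\<lambda>n. (l2_norm \<alpha> (T (e n)))^2))"

end

theory Submission
  imports Defs
begin

text \<open>
  The weighted measure is invariant under the rotations z \<mapsto> c z, |c| = 1. Averaging over
  rotations and applying Cauchy's formula on circles shows that for h holomorphic and integrable on
  the disc and a bounded radial factor \<rho>,
  \<integral> \<rho>(|z|) cnj(z)^k h(z) d\<mu> = h_k \<integral> \<rho>(|z|) |z|^(2k) d\<mu>,
  where h_k is the k-th Taylor coefficient of h at 0. With the moments m_n = \<integral> |z|^(2n) d\<mu>,
  this identity makes e_n = z^n / sqrt m_n an orthonormal basis of A^2 and shows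
  P(cnj(z) e_n) = r_n z^(n-1) / sqrt m_n, where r_n = m_n / m_(n-1) and r_0 = 0.
  By Pythagoras, ||S e_n||^2 = r_(n+1) - r_n. This sum telescopes, and its partial sums
  are bounded by 1 because the moments decrease.
\<close>

section \<open>Rotation invariance of Lebesgue measure on the plane\<close>

lemma borel_measurable_case_prod_Complex [measurable]:
  "case_prod Complex \<in> borel_measurable (borel :: (real \<times> real) measure)"
proof -
  have "case_prod Complex = (\<lambda>p. complex_of_real (fst p) + \<i> * complex_of_real (snd p))"
    by (auto simp: complex_eq_iff)
  then show ?thesis
    by (simp add: borel_measurable_continuous_onI continuous_intros)
qed

lemma distr_lborel_case_prod_Complex: "distr lborel borel (case_prod Complex) = lborel"
proof (rule lborel_eqI[symmetric])
  fix l u :: complex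
  assume "\<And>b. b \<in> Basis \<Longrightarrow> l \<bullet> b \<le> u \<bullet> b"
  from this[of 1] this[of \<i>] have "Re l \<le> Re u" "Im l \<le> Im u"
    by (auto simp: Basis_complex_def)
  moreover have "case_prod Complex -` box l u = box (Re l, Im l) (Re u, Im u)"
    by (auto simp: box_def Basis_complex_def Basis_prod_def inner_prod_def)
  ultimately show "emeasure (distr lborel borel (case_prod Complex)) (box l u)
      = ennreal (\<Prod>b\<in>Basis. (u - l) \<bullet> b)"
    by (simp add: emeasure_distr emeasure_lborel_box_eq Basis_prod_def Basis_complex_def
        inner_prod_def prod.union_disjoint)
qed simp

definition shear_fst :: "real \<Rightarrow> real \<times> real \<Rightarrow> real \<times> real" where
  "shear_fst a p = (fst p + a * snd p, snd p)"

definition shear_snd :: "real \<Rightarrow> real \<times> real \<Rightarrow> real \<times> real" where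
  "shear_snd a p = (fst p, snd p + a * fst p)"

lemma borel_measurable_shear [measurable]:
  "shear_fst a \<in> borel_measurable borel" "shear_snd a \<in> borel_measurable borel"
  unfolding shear_fst_def shear_snd_def
  by (intro borel_measurable_continuous_onI continuous_intros)+

lemma distr_lborel_shear_fst: "distr lborel borel (shear_fst a) = lborel"
proof (rule measure_eqI)
  fix A :: "(real \<times> real) set"
  assume "A \<in> sets (distr lborel borel (shear_fst a))"
  then have [measurable]: "A \<in> sets borel" by simp
  have "emeasure (distr lborel borel (shear_fst a)) A
      = (\<integral>\<^sup>+p. indicator A (shear_fst a p) \<partial>(lborel \<Otimes>\<^sub>M lborel))"
    by (subst nn_integral_indicator[symmetric], simp, subst nn_integral_distr) (auto simp: lborel_prod)
  also have "\<dots> = (\<integral>\<^sup>+y. \<integral>\<^sup>+x. indicator A (x + a * y, y) \<partial>lborel \<partial>lborel)"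
    by (subst lborel_pair.nn_integral_snd[symmetric]) (auto simp: shear_fst_def)
  also have "\<dots> = (\<integral>\<^sup>+y. \<integral>\<^sup>+x. indicator A (x, y) \<partial>lborel \<partial>lborel)"
  proof (rule nn_integral_cong)
    fix y :: real
    show "(\<integral>\<^sup>+x. indicator A (x + a * y, y) \<partial>lborel) = (\<integral>\<^sup>+x. indicator A (x, y) \<partial>lborel)"
      using nn_integral_real_affine[of "\<lambda>x. indicator A (x, y)" 1 "a * y"] by (simp add: add.commute)
  qed
  also have "\<dots> = (\<integral>\<^sup>+p. indicator A p \<partial>(lborel \<Otimes>\<^sub>M lborel))"
    by (subst lborel_pair.nn_integral_snd[symmetric]) (auto simp: lborel_prod)
  also have "\<dots> = emeasure lborel A"
    by (simp add: lborel_prod)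
  finally show "emeasure (distr lborel borel (shear_fst a)) A = emeasure lborel A" .
qed simp

lemma distr_lborel_comp:
  fixes f g :: "'a::euclidean_space \<Rightarrow> 'a"
  assumes [measurable]: "f \<in> borel_measurable borel" "g \<in> borel_measurable borel"
    and "distr lborel borel f = lborel" "distr lborel borel g = lborel"
  shows "distr lborel borel (f \<circ> g) = lborel"
  using distr_distr[of f borel borel g lborel] assms by simp

lemma borel_measurable_swap [measurable]:
  "prod.swap \<in> borel_measurable (borel :: ('a::topological_space \<times> 'b::topological_space) measure)"
  by (intro borel_measurable_continuous_onI continuous_on_swap)

lemma distr_lborel_swap: "distr lborel borel prod.swap = (lborel :: (real \<times> real) measure)"
proof -
  have "distr lborel borel prod.swap = distr lborel lborel (\<lambda>p::real \<times> real. (snd p, fst p))"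
    by (rule distr_cong) auto
  also have "\<dots> = lborel"
    using lborel_pair.distr_pair_swap[symmetric] by (simp add: lborel_prod case_prod_unfold)
  finally show ?thesis .
qed

lemma distr_lborel_shear_snd: "distr lborel borel (shear_snd a) = lborel"
proof -
  have "shear_snd a = prod.swap \<circ> (shear_fst a \<circ> prod.swap)"
    by (auto simp: shear_snd_def shear_fst_def)
  then show ?thesis
    by (simp add: distr_lborel_comp distr_lborel_swap distr_lborel_shear_fst)
qed

(* For c = cis t this is the classical factorization of a rotation into shears
   with parameters -tan (t/2), sin t, -tan (t/2). *)
lemma mult_unimodular_eq_shears:
  fixes c :: complex
  assumes "cmod c = 1" "c \<noteq> -1"
  defines "a \<equiv> - Im c / (1 + Re c)"
  shows "(*) c \<circ> case_prod Complex
      = case_prod Complex \<circ> (shear_fst a \<circ> shear_snd (Im c) \<circ> shear_fst a)"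
proof -
  have norm: "(Re c)\<^sup>2 + (Im c)\<^sup>2 = 1"
    using assms(1) by (simp add: cmod_def)
  have "1 + Re c \<noteq> 0"
  proof
    assume "1 + Re c = 0"
    then have "Re c = -1" by simp
    with norm have "(Im c)\<^sup>2 = 0" by simp
    then have "Im c = 0" by simp
    with \<open>1 + Re c = 0\<close> assms(2) show False by (simp add: complex_eq_iff)
  qed
  then have a_Im: "a * Im c = Re c - 1" and a_Re: "a * (1 + Re c) = - Im c"
    using norm by (auto simp: a_def field_simps power2_eq_square)
  show ?thesis
  proof
    fix p :: "real \<times> real"
    obtain x y where p: "p = (x, y)" by (cases p)
    have "x + a * y + a * (y + Im c * (x + a * y)) = x * (1 + a * Im c) + y * (a * (2 + a * Im c))"
      by (simp add: algebra_simps)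
    also have "\<dots> = Re c * x - Im c * y"
      using a_Im a_Re by simp
    finally have "Re c * x - Im c * y = x + a * y + a * (y + Im c * (x + a * y))" ..
    moreover have "Im c * x + Re c * y = y + Im c * (x + a * y)"
      using a_Im by (simp add: algebra_simps) (metis distrib_left mult.left_commute mult_1_right)
    ultimately show "((*) c \<circ> case_prod Complex) p
        = (case_prod Complex \<circ> (shear_fst a \<circ> shear_snd (Im c) \<circ> shear_fst a)) p"
      by (simp add: p shear_fst_def shear_snd_def complex_eq_iff)
  qed
qed

lemma distr_lborel_mult_unimodular:
  fixes c :: complex
  assumes "cmod c = 1"
  shows "distr lborel borel ((*) c) = lborel"
proof -
  have rotation: "distr lborel borel ((*) c) = lborel" if "cmod c = 1" "c \<noteq> -1" for c :: complex
  proof -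
    define a where "a = - Im c / (1 + Re c)"
    define R where "R = shear_fst a \<circ> shear_snd (Im c) \<circ> shear_fst a"
    have [measurable]: "R \<in> borel_measurable borel"
      by (simp add: R_def)
    have "distr lborel borel ((*) c) = distr (distr lborel borel (case_prod Complex)) borel ((*) c)"
      by (simp add: distr_lborel_case_prod_Complex)
    also have "\<dots> = distr lborel borel ((*) c \<circ> case_prod Complex)"
      by (subst distr_distr) auto
    also have "\<dots> = distr lborel borel (case_prod Complex \<circ> R)"
      using mult_unimodular_eq_shears[OF that] by (simp add: R_def a_def)
    also have "\<dots> = distr (distr lborel borel R) borel (case_prod Complex)"
      by (subst distr_distr) auto
    also have "distr lborel borel R = lborel"
      unfolding R_def
      by (intro distr_lborel_comp) (simp_all add: distr_lborel_shear_fst distr_lborel_shear_snd)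
    finally show ?thesis
      by (simp add: distr_lborel_case_prod_Complex)
  qed
  show ?thesis
  proof (cases "c = -1")
    case True
    have "distr lborel borel ((*) \<i>) = (lborel :: complex measure)"
      by (rule rotation) (auto simp: complex_eq_iff)
    then have "distr lborel borel ((*) \<i> \<circ> (*) \<i>) = (lborel :: complex measure)"
      by (intro distr_lborel_comp) (auto intro: borel_measurable_continuous_onI continuous_intros)
    moreover have "(*) c = (*) \<i> \<circ> (*) \<i>"
      using True by (auto simp: fun_eq_iff)
    ultimately show ?thesis
      by simp
  qed (use assms rotation in blast)
qed

section \<open>Averaging over rotations\<close>

lemma shiftpath_circlepath_eq_rotation:
  fixes z :: complex
  assumes "z \<noteq> 0"
  obtains s where "s \<in> {0..1}" "shiftpath s (circlepath 0 (cmod z)) = (\<lambda>t. z * cis (2 * pi * t))"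
proof
  define s where "s = Arg2pi z / (2 * pi)"
  show "s \<in> {0..1}"
    using Arg2pi[of z] by (auto simp: s_def)
  have z_polar: "z = cmod z * cis (2 * pi * s)"
    using Arg2pi[of z] by (simp add: is_Arg_def s_def cis_conv_exp)
  show "shiftpath s (circlepath 0 (cmod z)) = (\<lambda>t. z * cis (2 * pi * t))"
  proof
    fix t
    have "circlepath 0 (cmod z) x = cmod z * cis (2 * pi * x)" for x
      by (simp add: circlepath cis_conv_exp mult_ac)
    moreover have "cis (2 * pi * (s + t - 1)) = cis (2 * pi * (s + t)) / cis (2 * pi)"
      by (simp only: cis_divide right_diff_distrib mult_1_right)
    then have "cis (2 * pi * (s + t - 1)) = cis (2 * pi * s) * cis (2 * pi * t)"
      by (simp add: cis_mult distrib_left)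
    ultimately show "shiftpath s (circlepath 0 (cmod z)) t = z * cis (2 * pi * t)"
      by (subst (2) z_polar) (simp add: shiftpath_def cis_mult algebra_simps)
  qed
qed

lemma has_integral_circle_cnj_power_holomorphic:
  assumes h: "h holomorphic_on ball 0 R" and z: "z \<in> ball 0 R" "z \<noteq> 0"
  shows "((\<lambda>t. cnj (cis (2 * pi * t)) ^ k * h (cis (2 * pi * t) * z))
      has_integral (deriv ^^ k) h 0 / fact k * z ^ k) {0..1}"
proof -
  define r where "r = cmod z"
  have r: "0 < r" "r < R"
    using z by (auto simp: r_def)
  let ?\<gamma> = "\<lambda>t. z * cis (2 * pi * t)"
  obtain s where s: "s \<in> {0..1}" and shift: "shiftpath s (circlepath 0 r) = ?\<gamma>"
    using shiftpath_circlepath_eq_rotation[OF z(2)] unfolding r_def by blast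
  have "((\<lambda>u. h u / (u - 0) ^ Suc k) has_contour_integral (2 * pi * \<i>) / fact k * (deriv ^^ k) h 0)
      (circlepath 0 r)"
    using r
    by (intro Cauchy_has_contour_integral_higher_derivative_circlepath
        holomorphic_on_subset[OF h] continuous_on_subset[OF holomorphic_on_imp_continuous_on[OF h]])
      auto
  from has_contour_integral_shiftpath[OF this valid_path_circlepath s]
  have "((\<lambda>t. h (?\<gamma> t) / ?\<gamma> t ^ Suc k * vector_derivative ?\<gamma> (at t))
      has_integral (2 * pi * \<i>) / fact k * (deriv ^^ k) h 0) {0..1}"
    by (simp add: shift has_contour_integral)
  moreover have "vector_derivative ?\<gamma> (at t) = ?\<gamma> t * (2 * pi * \<i>)" for t
  proof (rule vector_derivative_at)
    have "((\<lambda>w. z * exp (\<i> * (2 * pi * w))) has_field_derivative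
        z * exp (\<i> * (2 * pi * of_real t)) * (2 * pi * \<i>)) (at (of_real t))"
      by (auto intro!: derivative_eq_intros)
    from has_vector_derivative_real_field[OF this]
    show "(?\<gamma> has_vector_derivative ?\<gamma> t * (2 * pi * \<i>)) (at t)"
      by (simp add: cis_conv_exp)
  qed
  ultimately have "((\<lambda>t. (2 * pi * \<i> / z ^ k) * (cnj (cis (2 * pi * t)) ^ k * h (cis (2 * pi * t) * z)))
      has_integral (2 * pi * \<i>) / fact k * (deriv ^^ k) h 0) {0..1}"
    using z(2) by (simp add: cis_cnj cis_inverse[symmetric] field_simps power_mult_distrib)
  then show ?thesis
    using z(2) by (subst (asm) has_integral_mult_right_iff) (auto simp: field_simps)
qed

lemma borel_measurable_rotated_family:
  fixes F :: "complex \<Rightarrow> 'b::{banach, second_countable_topology}"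
  assumes [measurable]: "F \<in> borel_measurable borel"
  shows "(\<lambda>p::real \<times> complex. indicator {0..1} (fst p) *\<^sub>R F (cis (2 * pi * fst p) * snd p))
      \<in> borel_measurable borel"
proof -
  have "closed ({0..1::real} \<times> (UNIV :: complex set))"
    by (intro closed_Times) auto
  then have "(indicator ({0..1::real} \<times> (UNIV :: complex set)) :: _ \<Rightarrow> real) \<in> borel_measurable borel"
    by (intro borel_measurable_indicator borel_closed)
  moreover have "(indicator ({0..1::real} \<times> (UNIV :: complex set)) :: _ \<Rightarrow> real)
      = (\<lambda>p. indicator {0..1::real} (fst p))"
    by (auto simp: fun_eq_iff indicator_def)
  moreover have "(\<lambda>p::real \<times> complex. cis (2 * pi * fst p) * snd p) \<in> borel_measurable borel"
    by (intro borel_measurable_continuous_onI continuous_intros)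
  ultimately show ?thesis
    using measurable_compose[of _ borel borel F] by (intro borel_measurable_scaleR) simp_all
qed

lemma borel_measurable_circle_average:
  fixes F :: "complex \<Rightarrow> 'b::{banach, second_countable_topology}"
  assumes "F \<in> borel_measurable borel"
  shows "(\<lambda>z. LINT t:{0..1}|lborel. F (cis (2 * pi * t) * z)) \<in> borel_measurable borel"
proof -
  have sets_eq: "sets (borel \<Otimes>\<^sub>M lborel) = sets (borel :: (complex \<times> real) measure)"
    unfolding borel_prod[symmetric] by (intro sets_pair_measure_cong) simp_all
  have "(\<lambda>p. indicator {0..1::real} (snd p) *\<^sub>R F (cis (2 * pi * snd p) * fst p))
      \<in> borel_measurable (borel :: (complex \<times> real) measure)"
    using measurable_compose[OF borel_measurable_swap borel_measurable_rotated_family[OF assms]]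
    by simp
  then have "(\<lambda>(z, t). indicator {0..1::real} t *\<^sub>R F (cis (2 * pi * t) * z))
      \<in> borel_measurable (borel \<Otimes>\<^sub>M lborel)"
    unfolding measurable_cong_sets[OF sets_eq refl] case_prod_beta' .
  then show ?thesis
    unfolding set_lebesgue_integral_def by (rule lborel.borel_measurable_lebesgue_integral)
qed

lemma integral_eq_circle_average:
  fixes M :: "complex measure" and F :: "complex \<Rightarrow> 'b::{banach, second_countable_topology}"
  assumes "sigma_finite_measure M" and sets_M: "sets M = sets borel"
    and rotation_invariant: "\<And>c. cmod c = 1 \<Longrightarrow> distr M borel ((*) c) = M"
    and F: "integrable M F"
  shows "(\<integral>z. F z \<partial>M) = (\<integral>z. (LINT t:{0..1}|lborel. F (cis (2 * pi * t) * z)) \<partial>M)"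
proof -
  interpret pair_sigma_finite lborel M
    by (simp add: assms(1) lborel.sigma_finite_measure_axioms pair_sigma_finite_def)
  have [simp]: "measurable M = measurable borel"
    using sets_M by (intro ext measurable_cong_sets) auto
  have F_measurable [measurable]: "F \<in> borel_measurable borel"
    using borel_measurable_integrable[OF F] by simp
  define G where "G t z = indicator {0..1::real} t *\<^sub>R F (cis (2 * pi * t) * z)" for t z
  have sets_eq: "sets (lborel \<Otimes>\<^sub>M M) = sets (borel :: (real \<times> complex) measure)"
    unfolding borel_prod[symmetric] using sets_M by (intro sets_pair_measure_cong) simp_all
  have G_measurable: "(\<lambda>p. G (fst p) (snd p)) \<in> borel_measurable (lborel \<Otimes>\<^sub>M M)"
    unfolding measurable_cong_sets[OF sets_eq refl] G_def
    by (rule borel_measurable_rotated_family[OF F_measurable])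
  have G_slice: "(\<integral>z. G t z \<partial>M) = indicator {0..1::real} t *\<^sub>R (\<integral>z. F z \<partial>M)"
    "integrable M (G t)" for t
    unfolding G_def
    using integral_distr[of "(*) (cis (2 * pi * t))" M borel F] F F_measurable
      integrable_distr_eq[of "(*) (cis (2 * pi * t))" M borel F]
      rotation_invariant[of "cis (2 * pi * t)"]
    by simp_all
  have G_norm_slice: "(\<integral>z. norm (G t z) \<partial>M) = indicator {0..1::real} t * (\<integral>z. norm (F z) \<partial>M)" for t
    using integral_distr[of "(*) (cis (2 * pi * t))" M borel "\<lambda>z. norm (F z)"]
      rotation_invariant[of "cis (2 * pi * t)"]
    by (simp add: G_def indicator_def)
  have G_integrable: "integrable (lborel \<Otimes>\<^sub>M M) (\<lambda>(t, z). G t z)"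
    unfolding case_prod_beta' using G_measurable G_slice(2)
    by (intro Fubini_integrable) (simp_all add: G_norm_slice)
  have "(\<integral>z. F z \<partial>M) = (\<integral>t. (\<integral>z. G t z \<partial>M) \<partial>lborel)"
    by (simp add: G_slice)
  also have "\<dots> = (\<integral>z. (\<integral>t. G t z \<partial>lborel) \<partial>M)"
    using Fubini_integral[OF G_integrable] by simp
  finally show ?thesis
    by (simp add: G_def set_lebesgue_integral_def)
qed

lemma circle_average_cnj_power_holomorphic:
  assumes h: "h holomorphic_on disc" and z: "z \<in> disc" "z \<noteq> 0"
  shows "(LINT t:{0..1}|lborel. cnj (cis (2 * pi * t) * z) ^ k * h (cis (2 * pi * t) * z))
      = (deriv ^^ k) h 0 / fact k * of_real ((cmod z) ^ (2 * k))"
proof -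
  define g where "g t = cnj (cis (2 * pi * t)) ^ k * h (cis (2 * pi * t) * z)" for t
  have "continuous_on {0..1} (\<lambda>t. h (cis (2 * pi * t) * z))"
    using z(1) by (intro continuous_on_compose2[OF holomorphic_on_imp_continuous_on[OF h]])
      (auto intro!: continuous_intros simp: disc_def norm_mult)
  then have "continuous_on {0..1} (\<lambda>t. cnj z ^ k * g t)"
    unfolding g_def by (intro continuous_intros)
  then have "(LINT t:{0..1}|lborel. cnj z ^ k * g t) = integral {0..1} (\<lambda>t. cnj z ^ k * g t)"
    by (intro set_borel_integral_eq_integral(2) borel_integrable_atLeastAtMost')
  also have "\<dots> = cnj z ^ k * ((deriv ^^ k) h 0 / fact k * z ^ k)"
    unfolding g_def using h z
    by (intro integral_unique has_integral_mult_right has_integral_circle_cnj_power_holomorphic)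
      (auto simp: disc_def)
  also have "\<dots> = (deriv ^^ k) h 0 / fact k * of_real ((cmod z) ^ (2 * k))"
  proof -
    have "cnj z ^ k * z ^ k = of_real ((cmod z) ^ (2 * k))"
      by (simp only: power_mult_distrib[symmetric] mult.commute[of "cnj z"]
          complex_norm_square[symmetric] of_real_power power_mult)
    then show ?thesis
      by (metis mult.assoc mult.commute)
  qed
  finally show ?thesis
    by (simp add: g_def power_mult_distrib mult_ac)
qed

section \<open>The weighted measure\<close>

lemma borel_measurable_cnj [measurable]:
  "f \<in> borel_measurable M \<Longrightarrow> (\<lambda>x. cnj (f x)) \<in> borel_measurable M"
  using continuous_on_cnj[OF continuous_on_id] by (rule borel_measurable_continuous_on)

lemma not_AE_lborel_notin_open:
  fixes U :: "'a::euclidean_space set"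
  assumes "open U" "x \<in> U"
  shows "\<not> (AE z in lborel. z \<notin> U)"
proof
  assume "AE z in lborel. z \<notin> U"
  obtain r where r: "0 < r" "ball x r \<subseteq> U"
    using assms openE by blast
  from \<open>AE z in lborel. z \<notin> U\<close> have "AE z in lborel. z \<notin> ball x r"
    by eventually_elim (use r in auto)
  then have "emeasure lborel (ball x r) = 0"
    by (subst (asm) AE_iff_measurable[of "ball x r"]) auto
  moreover have "emeasure lborel (ball x r) = ennreal (unit_ball_vol DIM('a) * r ^ DIM('a))"
    using r by (intro emeasure_ball) auto
  ultimately show False
    using r unit_ball_vol_pos[of "DIM('a)"] by simp
qed

lemma continuous_on_eq_0_if_AE_lborel:
  fixes f :: "'a::euclidean_space \<Rightarrow> 'b::real_normed_vector"
  assumes "open U" "continuous_on U f" "AE z in lborel. z \<in> U \<longrightarrow> f z = 0" "x \<in> U"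
  shows "f x = 0"
proof (rule ccontr)
  assume "f x \<noteq> 0"
  define V where "V = U \<inter> f -` (- {0})"
  have "open V"
    unfolding V_def using assms(1,2) by (intro continuous_open_preimage) auto
  moreover have "x \<in> V"
    using \<open>f x \<noteq> 0\<close> assms(4) by (simp add: V_def)
  moreover have "AE z in lborel. z \<notin> V"
    using assms(3) by (auto simp: V_def elim: AE_mp)
  ultimately show False
    using not_AE_lborel_notin_open by blast
qed

lemma disc_in_borel [measurable]: "disc \<in> sets borel"
  by (simp add: disc_def)

lemma sets_wmeasure [simp, measurable_cong]: "sets (wmeasure a) = sets borel"
  by (simp add: wmeasure_def)

lemma measurable_wmeasure [simp]: "measurable (wmeasure a) = measurable borel"
  by (intro ext measurable_cong_sets) simp_all

lemma disc_iff_norm_square_less_1: "z \<in> disc \<longleftrightarrow> (cmod z)\<^sup>2 < 1"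
  by (simp add: disc_def abs_square_less_1)

lemma AE_wmeasure_iff: "(AE z in wmeasure a. P z) \<longleftrightarrow> (AE z in lborel. z \<in> disc \<longrightarrow> P z)"
proof -
  have "0 < indicator disc z * (1 - (cmod z)\<^sup>2) powr a \<longleftrightarrow> z \<in> disc" for z
    by (simp add: disc_iff_norm_square_less_1 indicator_def)
  then show ?thesis
    unfolding wmeasure_def by (subst AE_density) simp_all
qed

lemma AE_wmeasure_disc: "AE z in wmeasure a. z \<in> disc"
  by (simp add: AE_wmeasure_iff)

lemma AE_wmeasure_nonzero: "AE z in wmeasure a. z \<noteq> 0"
  unfolding AE_wmeasure_iff using AE_lborel_singleton[of 0] by eventually_elim simp

lemma finite_measure_wmeasure:
  assumes "0 \<le> a"
  shows "finite_measure (wmeasure a)"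
proof -
  have "emeasure (wmeasure a) UNIV
      = (\<integral>\<^sup>+z. ennreal (indicator disc z * (1 - (cmod z)\<^sup>2) powr a) \<partial>lborel)"
    by (simp add: wmeasure_def emeasure_density)
  also have "\<dots> \<le> (\<integral>\<^sup>+z. ennreal (indicator disc z) \<partial>lborel)"
  proof (intro nn_integral_mono)
    fix z :: complex
    have "z \<in> disc \<Longrightarrow> (1 - (cmod z)\<^sup>2) powr a \<le> 1"
      using assms by (intro powr_le1) (auto simp: disc_iff_norm_square_less_1)
    then show "ennreal (indicator disc z * (1 - (cmod z)\<^sup>2) powr a) \<le> ennreal (indicator disc z)"
      by (simp add: indicator_def)
  qed
  also have "\<dots> < \<infinity>"
    using emeasure_lborel_ball_finite[of 0 1] by (simp add: disc_def ennreal_indicator)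
  finally show ?thesis
    by (intro finite_measureI) (simp add: wmeasure_def)
qed

lemma distr_wmeasure_mult_unimodular:
  assumes "cmod c = 1"
  shows "distr (wmeasure a) borel ((*) c) = wmeasure a"
proof -
  define w where "w = (\<lambda>z. ennreal (indicator disc z * (1 - (cmod z)\<^sup>2) powr a))"
  have [measurable]: "w \<in> borel_measurable borel"
    unfolding w_def by measurable
  have "wmeasure a = density (distr lborel borel ((*) c)) w"
    by (simp add: wmeasure_def w_def distr_lborel_mult_unimodular assms)
  also have "\<dots> = distr (density lborel (\<lambda>z. w (c * z))) borel ((*) c)"
    by (rule density_distr) auto
  also have "(\<lambda>z. w (c * z)) = w"
    using assms by (simp add: w_def disc_def norm_mult indicator_def)
  finally show ?thesis
    by (simp add: wmeasure_def w_def)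
qed

lemma integrable_wmeasure_bounded:
  fixes f :: "complex \<Rightarrow> 'b::{banach, second_countable_topology}"
  assumes "0 \<le> a" "f \<in> borel_measurable borel" "\<And>z. z \<in> disc \<Longrightarrow> norm (f z) \<le> B"
  shows "integrable (wmeasure a) f"
proof -
  interpret finite_measure "wmeasure a"
    using assms(1) by (rule finite_measure_wmeasure)
  have "AE z in wmeasure a. norm (f z) \<le> B"
    using AE_wmeasure_disc[of a] by eventually_elim (rule assms(3))
  with assms(2) show ?thesis
    by (intro integrable_const_bound[where B = B]) simp_all
qed

lemma integral_wmeasure_cong_disc:
  fixes f g :: "complex \<Rightarrow> 'b::{banach, second_countable_topology}"
  assumes "f \<in> borel_measurable borel" "g \<in> borel_measurable borel" "\<And>z. z \<in> disc \<Longrightarrow> f z = g z"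
  shows "(LINT z|wmeasure a. f z) = (LINT z|wmeasure a. g z)"
  using assms AE_wmeasure_disc[of a] by (intro integral_cong_AE) (auto elim: AE_mp)

lemma integrable_radial_cnj_power_mult:
  fixes \<rho> :: "real \<Rightarrow> real"
  assumes "0 \<le> a" "integrable (wmeasure a) h"
    and \<rho>: "\<rho> \<in> borel_measurable borel" "\<And>r. 0 \<le> r \<Longrightarrow> r < 1 \<Longrightarrow> \<bar>\<rho> r\<bar> \<le> B"
  shows "integrable (wmeasure a) (\<lambda>z. of_real (\<rho> (cmod z)) * cnj z ^ k * h z)"
proof (rule Bochner_Integration.integrable_bound)
  show "integrable (wmeasure a) (\<lambda>z. B * norm (h z))"
    using assms(2) by simp
  have [measurable]: "h \<in> borel_measurable borel"
    using assms(2) by simp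
  show "(\<lambda>z. of_real (\<rho> (cmod z)) * cnj z ^ k * h z) \<in> borel_measurable (wmeasure a)"
    using \<rho>(1) by measurable
  show "AE z in wmeasure a. norm (of_real (\<rho> (cmod z)) * cnj z ^ k * h z) \<le> norm (B * norm (h z))"
    using AE_wmeasure_disc
  proof eventually_elim
    fix z :: complex assume "z \<in> disc"
    then have "cmod z < 1" by (simp add: disc_def)
    then have "\<bar>\<rho> (cmod z)\<bar> * cmod z ^ k * cmod (h z) \<le> B * 1 * cmod (h z)"
      using \<rho>(2)[of "cmod z"] by (intro mult_right_mono mult_mono) (auto simp: power_le_one)
    then show "norm (of_real (\<rho> (cmod z)) * cnj z ^ k * h z) \<le> norm (B * norm (h z))"
      by (simp add: norm_mult norm_power)
  qed
qed

lemma integral_radial_cnj_power_holomorphic: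
  fixes \<rho> :: "real \<Rightarrow> real"
  assumes a: "0 \<le> a" and h: "h holomorphic_on disc" "integrable (wmeasure a) h"
    and \<rho>: "\<rho> \<in> borel_measurable borel" "\<And>r. 0 \<le> r \<Longrightarrow> r < 1 \<Longrightarrow> \<bar>\<rho> r\<bar> \<le> B"
  shows "(LINT z|wmeasure a. of_real (\<rho> (cmod z)) * cnj z ^ k * h z)
      = (deriv ^^ k) h 0 / fact k * of_real (LINT z|wmeasure a. \<rho> (cmod z) * (cmod z) ^ (2 * k))"
proof -
  define F where "F z = of_real (\<rho> (cmod z)) * cnj z ^ k * h z" for z
  have [measurable]: "h \<in> borel_measurable borel" "\<rho> \<in> borel_measurable borel"
    using h(2) \<rho>(1) by simp_all
  have [measurable]: "F \<in> borel_measurable borel"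
    unfolding F_def by measurable
  have "integrable (wmeasure a) F"
    unfolding F_def using a h(2) \<rho> by (rule integrable_radial_cnj_power_mult)
  then have "(LINT z|wmeasure a. F z)
      = (LINT z|wmeasure a. (LINT t:{0..1}|lborel. F (cis (2 * pi * t) * z)))"
    using finite_measure_wmeasure[OF a]
    by (intro integral_eq_circle_average distr_wmeasure_mult_unimodular)
      (auto simp: finite_measure_def)
  also have "\<dots> = (LINT z|wmeasure a.
      (deriv ^^ k) h 0 / fact k * of_real (\<rho> (cmod z) * (cmod z) ^ (2 * k)))"
  proof (rule integral_cong_AE)
    show "AE z in wmeasure a. (LINT t:{0..1}|lborel. F (cis (2 * pi * t) * z))
        = (deriv ^^ k) h 0 / fact k * of_real (\<rho> (cmod z) * (cmod z) ^ (2 * k))"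
      using AE_wmeasure_disc AE_wmeasure_nonzero
    proof eventually_elim
      fix z :: complex assume z: "z \<in> disc" "z \<noteq> 0"
      have "(LINT t:{0..1}|lborel. F (cis (2 * pi * t) * z)) = of_real (\<rho> (cmod z)) *
          (LINT t:{0..1}|lborel. cnj (cis (2 * pi * t) * z) ^ k * h (cis (2 * pi * t) * z))"
        by (simp add: F_def norm_mult set_integral_mult_right mult.assoc)
      also have "\<dots> = (deriv ^^ k) h 0 / fact k * of_real (\<rho> (cmod z) * (cmod z) ^ (2 * k))"
        using circle_average_cnj_power_holomorphic[OF h(1) z] by simp
      finally show "(LINT t:{0..1}|lborel. F (cis (2 * pi * t) * z))
          = (deriv ^^ k) h 0 / fact k * of_real (\<rho> (cmod z) * (cmod z) ^ (2 * k))" .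
    qed
  qed (simp_all add: borel_measurable_circle_average)
  also have "\<dots> = (deriv ^^ k) h 0 / fact k
      * of_real (LINT z|wmeasure a. \<rho> (cmod z) * (cmod z) ^ (2 * k))"
    by (simp only: integral_mult_right_zero integral_complex_of_real)
  finally show ?thesis
    unfolding F_def .
qed

section \<open>The spaces L^2 and A^2\<close>

lemma L2_bounded:
  assumes "0 \<le> a" "f \<in> borel_measurable borel" "\<And>z. z \<in> disc \<Longrightarrow> cmod (f z) \<le> B"
  shows "L2 a f"
  unfolding L2_def using assms
  by (auto intro!: integrable_wmeasure_bounded[where B = "B\<^sup>2"] power_mono)

lemma integrable_mult_cnj_L2:
  assumes "L2 a f" "L2 a g"
  shows "integrable (wmeasure a) (\<lambda>z. f z * cnj (g z))"
proof (rule Bochner_Integration.integrable_bound)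
  show "integrable (wmeasure a) (\<lambda>z. (cmod (f z))\<^sup>2 + (cmod (g z))\<^sup>2)"
    using assms by (simp add: L2_def)
  have [measurable]: "f \<in> borel_measurable borel" "g \<in> borel_measurable borel"
    using assms by (simp_all add: L2_def)
  show "(\<lambda>z. f z * cnj (g z)) \<in> borel_measurable (wmeasure a)"
    by measurable
  have "cmod (f z) * cmod (g z) \<le> (cmod (f z))\<^sup>2 + (cmod (g z))\<^sup>2" for z
    using sum_squares_bound[of "cmod (f z)" "cmod (g z)"]
      mult_nonneg_nonneg[OF norm_ge_zero norm_ge_zero, of "f z" "g z"]
    by linarith
  then show "AE z in wmeasure a. norm (f z * cnj (g z)) \<le> norm ((cmod (f z))\<^sup>2 + (cmod (g z))\<^sup>2)"
    by (intro AE_I2) (simp add: norm_mult)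
qed

lemma L2_diff:
  assumes "L2 a f" "L2 a g"
  shows "L2 a (\<lambda>z. f z - g z)"
  unfolding L2_def
proof
  have [measurable]: "f \<in> borel_measurable borel" "g \<in> borel_measurable borel"
    using assms by (simp_all add: L2_def)
  show "(\<lambda>z. f z - g z) \<in> borel_measurable (wmeasure a)"
    by measurable
  show "integrable (wmeasure a) (\<lambda>z. (cmod (f z - g z))\<^sup>2)"
  proof (rule Bochner_Integration.integrable_bound)
    show "integrable (wmeasure a) (\<lambda>z. 2 * (cmod (f z))\<^sup>2 + 2 * (cmod (g z))\<^sup>2)"
      using assms by (simp add: L2_def)
    show "(\<lambda>z. (cmod (f z - g z))\<^sup>2) \<in> borel_measurable (wmeasure a)"
      by measurable
    have "(cmod (f z - g z))\<^sup>2 \<le> 2 * (cmod (f z))\<^sup>2 + 2 * (cmod (g z))\<^sup>2" for z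
    proof -
      have "(cmod (f z - g z))\<^sup>2 \<le> (cmod (f z) + cmod (g z))\<^sup>2"
        by (simp add: norm_triangle_ineq4 power_mono)
      also have "\<dots> \<le> 2 * (cmod (f z))\<^sup>2 + 2 * (cmod (g z))\<^sup>2"
        using sum_squares_bound[of "cmod (f z)" "cmod (g z)"] by (simp add: power2_sum)
      finally show ?thesis .
    qed
    then show "AE z in wmeasure a.
        norm ((cmod (f z - g z))\<^sup>2) \<le> norm (2 * (cmod (f z))\<^sup>2 + 2 * (cmod (g z))\<^sup>2)"
      by (intro AE_I2) simp
  qed
qed

lemma integrable_L2:
  assumes "0 \<le> a" "L2 a f"
  shows "integrable (wmeasure a) f"
  using integrable_mult_cnj_L2[OF assms(2) L2_bounded[OF assms(1), of "\<lambda>_. 1" 1]] by simp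

lemma l2_inner_diff_left:
  assumes "L2 a f" "L2 a g" "L2 a h"
  shows "l2_inner a (\<lambda>z. f z - g z) h = l2_inner a f h - l2_inner a g h"
  unfolding l2_inner_def using assms
  by (simp add: left_diff_distrib integrable_mult_cnj_L2)

lemma l2_inner_diff_right:
  assumes "L2 a f" "L2 a g" "L2 a h"
  shows "l2_inner a f (\<lambda>z. g z - h z) = l2_inner a f g - l2_inner a f h"
  unfolding l2_inner_def using assms
  by (simp add: right_diff_distrib integrable_mult_cnj_L2)

lemma l2_inner_self: "l2_inner a f f = of_real ((l2_norm a f)\<^sup>2)"
proof -
  have "l2_inner a f f = (LINT z|wmeasure a. complex_of_real ((cmod (f z))\<^sup>2))"
    unfolding l2_inner_def by (simp only: complex_norm_square)
  also have "\<dots> = of_real (LINT z|wmeasure a. (cmod (f z))\<^sup>2)"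
    by (rule integral_complex_of_real)
  finally show ?thesis
    by (simp add: l2_norm_def)
qed

lemma A2_eq_0_if_l2_inner_self_eq_0:
  assumes f: "f \<in> A2 a" and "l2_inner a f f = 0"
  shows "f z = 0"
proof (cases "z \<in> disc")
  case True
  have "L2 a f" "f holomorphic_on disc"
    using f by (simp_all add: A2_def)
  with \<open>l2_inner a f f = 0\<close> have "AE z in wmeasure a. (cmod (f z))\<^sup>2 = 0"
    by (subst integral_nonneg_eq_0_iff_AE[symmetric]) (auto simp: l2_inner_self l2_norm_def L2_def)
  then have "AE z in lborel. z \<in> disc \<longrightarrow> f z = 0"
    by (simp add: AE_wmeasure_iff)
  with True holomorphic_on_imp_continuous_on[OF \<open>f holomorphic_on disc\<close>] show ?thesis
    by (intro continuous_on_eq_0_if_AE_lborel[of disc f]) (simp_all add: disc_def)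
next
  case False
  with f show ?thesis
    by (simp add: A2_def)
qed

lemma A2_diff: "f \<in> A2 a \<Longrightarrow> g \<in> A2 a \<Longrightarrow> (\<lambda>z. f z - g z) \<in> A2 a"
  by (auto simp: A2_def intro: holomorphic_intros L2_diff)

lemma bergman_proj_eqI:
  assumes f: "L2 a f" and q: "q \<in> A2 a"
    and orth: "\<And>h. h \<in> A2 a \<Longrightarrow> l2_inner a (\<lambda>z. f z - q z) h = 0"
  shows "bergman_proj a f = q"
  unfolding bergman_proj_def
proof (rule the_equality)
  show "q \<in> A2 a \<and> (\<forall>h\<in>A2 a. l2_inner a (\<lambda>z. f z - q z) h = 0)"
    using q orth by blast
next
  fix q' assume q': "q' \<in> A2 a \<and> (\<forall>h\<in>A2 a. l2_inner a (\<lambda>z. f z - q' z) h = 0)"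
  define d where "d = (\<lambda>z. q z - q' z)"
  have d: "d \<in> A2 a"
    unfolding d_def using A2_diff q q' by blast
  have L2: "L2 a q" "L2 a q'" "L2 a d"
    using q q' d by (simp_all add: A2_def)
  have "l2_inner a d d = l2_inner a q d - l2_inner a q' d"
    using L2 by (simp add: d_def l2_inner_diff_left)
  also have "\<dots> = l2_inner a (\<lambda>z. f z - q' z) d - l2_inner a (\<lambda>z. f z - q z) d"
    using f L2 by (simp add: l2_inner_diff_left)
  also have "\<dots> = 0"
    using q' orth[OF d] d by simp
  finally have "d z = 0" for z
    using A2_eq_0_if_l2_inner_self_eq_0[OF d] by blast
  then show "q' = q"
    by (auto simp: d_def)
qed

section \<open>Moments and the monomial basis\<close>

definition moment :: "real \<Rightarrow> nat \<Rightarrow> real" where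
  "moment a n = (LINT z|wmeasure a. (cmod z) ^ (2 * n))"

lemma integrable_wmeasure_norm_power:
  "0 \<le> a \<Longrightarrow> integrable (wmeasure a) (\<lambda>z. (cmod z) ^ k)"
  by (rule integrable_wmeasure_bounded[where B = 1]) (auto simp: disc_def power_le_one)

lemma moment_pos:
  assumes "0 \<le> a"
  shows "0 < moment a n"
proof -
  have "moment a n \<noteq> 0"
  proof
    assume "moment a n = 0"
    then have "AE z in wmeasure a. (cmod z) ^ (2 * n) = 0"
      unfolding moment_def using integrable_wmeasure_norm_power[OF assms]
      by (subst (asm) integral_nonneg_eq_0_iff_AE) auto
    then have "AE z in lborel. z \<notin> disc - {0}"
      by (simp add: AE_wmeasure_iff)
    moreover have "open (disc - {0})" "1/2 \<in> disc - {0}"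
      by (auto simp: disc_def)
    ultimately show False
      using not_AE_lborel_notin_open by blast
  qed
  moreover have "0 \<le> moment a n"
    by (simp add: moment_def)
  ultimately show ?thesis
    by simp
qed

lemma moment_Suc_le:
  assumes "0 \<le> a"
  shows "moment a (Suc n) \<le> moment a n"
  unfolding moment_def
proof (rule integral_mono_AE)
  show "AE z in wmeasure a. (cmod z) ^ (2 * Suc n) \<le> (cmod z) ^ (2 * n)"
    using AE_wmeasure_disc by eventually_elim (rule power_decreasing, auto simp: disc_def)
qed (rule integrable_wmeasure_norm_power[OF assms])+

definition moment_ratio :: "real \<Rightarrow> nat \<Rightarrow> real" where
  "moment_ratio a n = (if n = 0 then 0 else moment a n / moment a (n - 1))"

lemma moment_ratio_le_1:
  assumes "0 \<le> a"
  shows "moment_ratio a n \<le> 1"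
proof (cases n)
  case (Suc m)
  then show ?thesis
    using moment_Suc_le[OF assms, of m] moment_pos[OF assms, of m] by (simp add: moment_ratio_def)
qed (simp add: moment_ratio_def)

lemma integral_wmeasure_power_cnj_power:
  "(LINT z|wmeasure a. z ^ m * cnj z ^ n) = (if m = n then of_real (moment a n) else 0)"
proof (cases "m = n")
  case True
  have "z ^ n * cnj z ^ n = of_real ((cmod z) ^ (2 * n))" for z
    by (simp only: power_mult_distrib[symmetric] complex_norm_square[symmetric] of_real_power power_mult)
  then have "(LINT z|wmeasure a. z ^ n * cnj z ^ n) = (LINT z|wmeasure a. of_real ((cmod z) ^ (2 * n)))"
    by (simp only:)
  also have "\<dots> = of_real (moment a n)"
    unfolding moment_def by (rule integral_complex_of_real)
  finally show ?thesis
    using True by simp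
next
  case False
  \<comment> \<open>Rotating by a c with c ^ m * cnj c ^ n = -1 turns the integral into its negative.\<close>
  define c where "c = cis (pi / (real m - real n))"
  have "cmod c = 1"
    by (simp add: c_def)
  have "c ^ m * cnj c ^ n = cis ((real m - real n) * (pi / (real m - real n)))"
    by (simp add: c_def Complex.DeMoivre cis_cnj cis_mult left_diff_distrib diff_divide_distrib)
  also have "\<dots> = -1"
    using False by simp
  finally have c_power: "c ^ m * cnj c ^ n = -1" .
  let ?I = "LINT z|wmeasure a. z ^ m * cnj z ^ n"
  have "?I = (LINT z|wmeasure a. (c * z) ^ m * cnj (c * z) ^ n)"
    using integral_distr[of "(*) c" "wmeasure a" borel "\<lambda>z. z ^ m * cnj z ^ n"]
      distr_wmeasure_mult_unimodular[OF \<open>cmod c = 1\<close>] by simp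
  also have "\<dots> = (LINT z|wmeasure a. (c ^ m * cnj c ^ n) * (z ^ m * cnj z ^ n))"
    by (simp add: power_mult_distrib mult_ac)
  also have "\<dots> = (c ^ m * cnj c ^ n) * ?I"
    by (rule integral_mult_right_zero)
  finally have "?I = - ?I"
    by (simp add: c_power)
  with False show ?thesis
    by simp
qed

definition monomial_basis :: "real \<Rightarrow> nat \<Rightarrow> complex \<Rightarrow> complex" where
  "monomial_basis a n z = (if z \<in> disc then z ^ n / of_real (sqrt (moment a n)) else 0)"

lemma borel_measurable_monomial_basis [measurable]: "monomial_basis a n \<in> borel_measurable borel"
  unfolding monomial_basis_def by measurable

lemma monomial_basis_A2:
  assumes "0 \<le> a"
  shows "monomial_basis a n \<in> A2 a"
proof -
  have "(\<lambda>z. z ^ n / of_real (sqrt (moment a n))) holomorphic_on disc"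
    using moment_pos[OF assms, of n] by (intro holomorphic_intros) simp
  then have "monomial_basis a n holomorphic_on disc"
    by (rule holomorphic_transform) (simp add: monomial_basis_def)
  moreover have "L2 a (monomial_basis a n)"
    using assms moment_pos[OF assms, of n]
    by (intro L2_bounded[where B = "1 / sqrt (moment a n)"])
      (auto simp: monomial_basis_def norm_divide norm_power disc_def power_le_one divide_right_mono)
  ultimately show ?thesis
    by (simp add: A2_def monomial_basis_def)
qed

lemma l2_inner_monomial_basis:
  assumes "0 \<le> a"
  shows "l2_inner a (monomial_basis a m) (monomial_basis a n) = (if m = n then 1 else 0)"
proof -
  have "l2_inner a (monomial_basis a m) (monomial_basis a n)
      = (LINT z|wmeasure a. of_real (1 / (sqrt (moment a m) * sqrt (moment a n))) * (z ^ m * cnj z ^ n))"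
    unfolding l2_inner_def by (rule integral_wmeasure_cong_disc) (auto simp: monomial_basis_def)
  also have "\<dots> = of_real (1 / (sqrt (moment a m) * sqrt (moment a n)))
      * (if m = n then of_real (moment a n) else 0)"
    by (simp add: integral_wmeasure_power_cnj_power)
  also have "\<dots> = (if m = n then 1 else 0)"
    using moment_pos[OF assms, of n] by (simp add: real_sqrt_mult[symmetric])
  finally show ?thesis .
qed

lemma l2_inner_monomial_basis_taylor:
  assumes "0 \<le> a" "f \<in> A2 a"
  shows "l2_inner a f (monomial_basis a n) = (deriv ^^ n) f 0 / fact n * of_real (sqrt (moment a n))"
proof -
  have f: "f holomorphic_on disc" "integrable (wmeasure a) f"
    using assms integrable_L2 by (auto simp: A2_def)
  have "l2_inner a f (monomial_basis a n)
      = (LINT z|wmeasure a. of_real (1 / sqrt (moment a n)) * (of_real 1 * cnj z ^ n * f z))"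
    unfolding l2_inner_def using f(2) moment_pos[OF assms(1), of n]
    by (intro integral_wmeasure_cong_disc) (auto simp: monomial_basis_def field_simps)
  also have "\<dots> = of_real (1 / sqrt (moment a n)) * ((deriv ^^ n) f 0 / fact n * of_real (moment a n))"
    using integral_radial_cnj_power_holomorphic[OF assms(1) f, of "\<lambda>_. 1" 1 n]
    by (simp add: moment_def)
  also have "\<dots> = (deriv ^^ n) f 0 / fact n * of_real (sqrt (moment a n))"
  proof -
    have "of_real (moment a n) = of_real (sqrt (moment a n)) * (of_real (sqrt (moment a n)) :: complex)"
      using moment_pos[OF assms(1), of n] by (simp flip: of_real_mult)
    with moment_pos[OF assms(1), of n] show ?thesis
      by (simp add: field_simps)
  qed
  finally show ?thesis .
qed

lemma orthonormal_basis_A2_monomial_basis: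
  assumes "0 \<le> a"
  shows "orthonormal_basis_A2 a (monomial_basis a)"
  unfolding orthonormal_basis_A2_def
proof (intro conjI allI ballI impI)
  fix f z assume f: "f \<in> A2 a" and orth: "\<forall>n. l2_inner a f (monomial_basis a n) = 0"
  have "(deriv ^^ n) f 0 = 0" for n
    using orth l2_inner_monomial_basis_taylor[OF assms f, of n] moment_pos[OF assms, of n] by simp
  then show "f z = 0"
    using f by (cases "z \<in> disc") (auto simp: A2_def disc_def intro: holomorphic_fun_eq_0_on_ball)
qed (simp_all add: monomial_basis_A2 l2_inner_monomial_basis assms)

section \<open>The canonical solution on the basis\<close>

(* The projection of cnj z * e_n; for n = 0 the truncated exponent n - 1 is harmless
   because moment_ratio a 0 = 0. *)
definition proj_cnj_basis :: "real \<Rightarrow> nat \<Rightarrow> complex \<Rightarrow> complex" where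
  "proj_cnj_basis a n z =
     (if z \<in> disc then of_real (moment_ratio a n / sqrt (moment a n)) * z ^ (n - 1) else 0)"

lemma borel_measurable_proj_cnj_basis [measurable]: "proj_cnj_basis a n \<in> borel_measurable borel"
  unfolding proj_cnj_basis_def by measurable

lemma proj_cnj_basis_A2:
  assumes "0 \<le> a"
  shows "proj_cnj_basis a n \<in> A2 a"
proof -
  have "(\<lambda>z. of_real (moment_ratio a n / sqrt (moment a n)) * z ^ (n - 1)) holomorphic_on disc"
    by (intro holomorphic_intros)
  then have "proj_cnj_basis a n holomorphic_on disc"
    by (rule holomorphic_transform) (simp add: proj_cnj_basis_def)
  moreover have "L2 a (proj_cnj_basis a n)"
  proof (rule L2_bounded[OF assms, where B = "\<bar>moment_ratio a n / sqrt (moment a n)\<bar>"])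
    fix z assume "z \<in> disc"
    then have "cmod z ^ (n - 1) \<le> 1"
      by (simp add: disc_def power_le_one)
    then have "\<bar>moment_ratio a n / sqrt (moment a n)\<bar> * cmod z ^ (n - 1)
        \<le> \<bar>moment_ratio a n / sqrt (moment a n)\<bar>"
      by (intro mult_left_le) simp_all
    with \<open>z \<in> disc\<close> show "cmod (proj_cnj_basis a n z) \<le> \<bar>moment_ratio a n / sqrt (moment a n)\<bar>"
      by (simp add: proj_cnj_basis_def norm_mult norm_power del: of_real_divide)
  qed simp
  ultimately show ?thesis
    by (simp add: A2_def proj_cnj_basis_def)
qed

lemma L2_cnj_mult_monomial_basis:
  assumes "0 \<le> a"
  shows "L2 a (\<lambda>z. cnj z * monomial_basis a n z)"
proof (rule L2_bounded[OF assms, where B = "1 / sqrt (moment a n)"])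
  fix z assume "z \<in> disc"
  then have "cmod z \<le> 1"
    by (simp add: disc_def)
  with \<open>z \<in> disc\<close> moment_pos[OF assms, of n]
  show "cmod (cnj z * monomial_basis a n z) \<le> 1 / sqrt (moment a n)"
    by (auto simp: monomial_basis_def norm_mult norm_divide norm_power power_le_one
        divide_right_mono mult_le_one)
qed simp

lemma integral_wmeasure_id_mult_A2_eq_0:
  assumes a: "0 \<le> a" and "h \<in> A2 a"
  shows "(LINT z|wmeasure a. z * h z) = 0"
proof -
  have h: "h holomorphic_on disc" "integrable (wmeasure a) h"
    using assms integrable_L2 by (auto simp: A2_def)
  have "integrable (wmeasure a) (\<lambda>z. z * h z)"
  proof (rule Bochner_Integration.integrable_bound[OF h(2)])
    show "AE z in wmeasure a. norm (z * h z) \<le> norm (h z)"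
      using AE_wmeasure_disc
      by eventually_elim (auto simp: disc_def norm_mult intro: mult_left_le_one_le)
  qed (use h(2) in simp)
  then show ?thesis
    using integral_radial_cnj_power_holomorphic[OF a _ _, of "\<lambda>z. z * h z" "\<lambda>_. 1" 1 0] h(1)
    by (simp add: holomorphic_intros)
qed

lemma integral_wmeasure_norm_square_minus_moment_ratio_eq_0:
  assumes a: "0 \<le> a" and "h \<in> A2 a"
  shows "(LINT z|wmeasure a. of_real ((cmod z)\<^sup>2 - moment_ratio a (Suc m)) * cnj z ^ m * h z) = 0"
proof -
  define r where "r = moment_ratio a (Suc m)"
  have h: "h holomorphic_on disc" "integrable (wmeasure a) h"
    using assms integrable_L2 by (auto simp: A2_def)
  have "(LINT z|wmeasure a. of_real ((cmod z)\<^sup>2 - r) * cnj z ^ m * h z)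
      = (deriv ^^ m) h 0 / fact m * of_real (LINT z|wmeasure a. ((cmod z)\<^sup>2 - r) * (cmod z) ^ (2 * m))"
  proof (rule integral_radial_cnj_power_holomorphic[OF a h, where B = "1 + \<bar>r\<bar>"])
    fix t :: real assume "0 \<le> t" "t < 1"
    then have "0 \<le> t\<^sup>2" "t\<^sup>2 \<le> 1"
      by (simp_all add: power_le_one)
    then show "\<bar>t\<^sup>2 - r\<bar> \<le> 1 + \<bar>r\<bar>"
      by arith
  qed simp
  also have "(LINT z|wmeasure a. ((cmod z)\<^sup>2 - r) * (cmod z) ^ (2 * m))
      = moment a (Suc m) - r * moment a m"
    using integrable_wmeasure_norm_power[OF a]
    by (simp add: moment_def algebra_simps power_add power_mult_distrib power2_eq_square
        flip: power_Suc)
  also have "moment a (Suc m) - r * moment a m = 0"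
    using moment_pos[OF a, of m] by (simp add: r_def moment_ratio_def)
  finally show ?thesis
    by (simp add: r_def)
qed

lemma l2_inner_cnj_mult_basis_minus_proj:
  assumes a: "0 \<le> a" and h: "h \<in> A2 a"
  shows "l2_inner a (\<lambda>z. cnj z * monomial_basis a n z - proj_cnj_basis a n z) h = 0"
proof -
  define s where "s = sqrt (moment a n)"
  define r where "r = moment_ratio a n"
  have "s \<noteq> 0"
    using moment_pos[OF a, of n] by (simp add: s_def)
  have [measurable]: "h \<in> borel_measurable borel"
    using h by (simp add: A2_def L2_def)
  have "cnj (l2_inner a (\<lambda>z. cnj z * monomial_basis a n z - proj_cnj_basis a n z) h)
      = (LINT z|wmeasure a. of_real (1 / s) * ((z * cnj z ^ n - of_real r * cnj z ^ (n - 1)) * h z))"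
    unfolding l2_inner_def using \<open>s \<noteq> 0\<close>
    by (subst Bochner_Integration.integral_cnj[symmetric], intro integral_wmeasure_cong_disc)
      (auto simp: monomial_basis_def proj_cnj_basis_def s_def r_def field_simps)
  also have "\<dots> = 0"
  proof (cases n)
    case 0
    then show ?thesis
      using integral_wmeasure_id_mult_A2_eq_0[OF a h] by (simp add: r_def moment_ratio_def)
  next
    case (Suc m)
    have "z * cnj z ^ n - of_real r * cnj z ^ (n - 1) = of_real ((cmod z)\<^sup>2 - r) * cnj z ^ m" for z
      using complex_norm_square[of z] by (simp add: Suc algebra_simps)
    then show ?thesis
      using integral_wmeasure_norm_square_minus_moment_ratio_eq_0[OF a h, of m]
      by (simp add: Suc r_def mult.assoc)
  qed
  finally show ?thesis
    by simp
qed

lemma bergman_proj_cnj_mult_basis: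
  assumes "0 \<le> a"
  shows "bergman_proj a (\<lambda>z. cnj z * monomial_basis a n z) = proj_cnj_basis a n"
  using assms
  by (intro bergman_proj_eqI L2_cnj_mult_monomial_basis proj_cnj_basis_A2
      l2_inner_cnj_mult_basis_minus_proj)

lemma canonical_solution_monomial_basis:
  assumes "0 \<le> a"
  shows "canonical_solution a (monomial_basis a n)
      = (\<lambda>z. cnj z * monomial_basis a n z - proj_cnj_basis a n z)"
  using assms by (simp add: canonical_solution_def bergman_proj_cnj_mult_basis)

lemma l2_inner_cnj_mult_monomial_basis_self:
  assumes a: "0 \<le> a"
  shows "l2_inner a (\<lambda>z. cnj z * monomial_basis a n z) (\<lambda>z. cnj z * monomial_basis a n z)
      = of_real (moment_ratio a (Suc n))"
proof -
  have "of_real (sqrt (moment a n)) * of_real (sqrt (moment a n)) = (of_real (moment a n) :: complex)"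
    using moment_pos[OF a, of n] by (simp flip: of_real_mult)
  then have "l2_inner a (\<lambda>z. cnj z * monomial_basis a n z) (\<lambda>z. cnj z * monomial_basis a n z)
      = (LINT z|wmeasure a. of_real (1 / moment a n) * (z ^ Suc n * cnj z ^ Suc n))"
    unfolding l2_inner_def using moment_pos[OF a, of n]
    by (intro integral_wmeasure_cong_disc) (auto simp: monomial_basis_def field_simps)
  also have "\<dots> = of_real (1 / moment a n) * of_real (moment a (Suc n))"
    by (simp only: integral_mult_right_zero integral_wmeasure_power_cnj_power refl if_True)
  also have "\<dots> = of_real (moment_ratio a (Suc n))"
    by (simp add: moment_ratio_def)
  finally show ?thesis .
qed

lemma l2_inner_proj_cnj_basis_cnj_mult_monomial_basis:
  assumes a: "0 \<le> a"
  shows "l2_inner a (proj_cnj_basis a n) (\<lambda>z. cnj z * monomial_basis a n z) = of_real (moment_ratio a n)"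
proof -
  have M: "0 < moment a n"
    "of_real (sqrt (moment a n)) * of_real (sqrt (moment a n)) = (of_real (moment a n) :: complex)"
    using moment_pos[OF a, of n] by (simp_all flip: of_real_mult)
  then have "l2_inner a (proj_cnj_basis a n) (\<lambda>z. cnj z * monomial_basis a n z)
      = (LINT z|wmeasure a. of_real (moment_ratio a n / moment a n) * (z ^ (n - 1) * z * cnj z ^ n))"
    unfolding l2_inner_def
    by (intro integral_wmeasure_cong_disc) (auto simp: monomial_basis_def proj_cnj_basis_def field_simps)
  also have "\<dots> = of_real (moment_ratio a n)"
  proof (cases n)
    case (Suc m)
    then have "z ^ (n - 1) * z = z ^ n" for z :: complex
      by simp
    with M show ?thesis
      by (simp add: integral_wmeasure_power_cnj_power)
  qed (simp add: moment_ratio_def)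
  finally show ?thesis .
qed

lemma l2_norm_canonical_solution_monomial_basis:
  assumes a: "0 \<le> a"
  shows "(l2_norm a (canonical_solution a (monomial_basis a n)))\<^sup>2
      = moment_ratio a (Suc n) - moment_ratio a n"
proof -
  define u where "u = (\<lambda>z. cnj z * monomial_basis a n z)"
  define p where "p = proj_cnj_basis a n"
  have L2: "L2 a u" "L2 a p"
    using L2_cnj_mult_monomial_basis[OF a] proj_cnj_basis_A2[OF a] by (simp_all add: u_def p_def A2_def)
  \<comment> \<open>Pythagoras: u - p is orthogonal to p, so its squared norm is <u, u> - <p, u>.\<close>
  have "of_real ((l2_norm a (\<lambda>z. u z - p z))\<^sup>2) = l2_inner a (\<lambda>z. u z - p z) (\<lambda>z. u z - p z)"
    by (simp add: l2_inner_self)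
  also have "\<dots> = l2_inner a (\<lambda>z. u z - p z) u - l2_inner a (\<lambda>z. u z - p z) p"
    using L2 by (simp add: l2_inner_diff_right L2_diff)
  also have "l2_inner a (\<lambda>z. u z - p z) p = 0"
    using l2_inner_cnj_mult_basis_minus_proj[OF a proj_cnj_basis_A2[OF a]] by (simp add: u_def p_def)
  also have "l2_inner a (\<lambda>z. u z - p z) u = l2_inner a u u - l2_inner a p u"
    using L2 by (simp add: l2_inner_diff_left)
  finally have "of_real ((l2_norm a (\<lambda>z. u z - p z))\<^sup>2)
      = (of_real (moment_ratio a (Suc n) - moment_ratio a n) :: complex)"
    using l2_inner_cnj_mult_monomial_basis_self[OF a]
      l2_inner_proj_cnj_basis_cnj_mult_monomial_basis[OF a]
    by (simp add: u_def p_def)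
  then have "(l2_norm a (\<lambda>z. u z - p z))\<^sup>2 = moment_ratio a (Suc n) - moment_ratio a n"
    by (simp only: of_real_eq_iff)
  then show ?thesis
    using canonical_solution_monomial_basis[OF a, of n] by (simp add: u_def p_def)
qed

theorem mainTheorem2:
  fixes \<alpha> :: real
  assumes "\<alpha> \<ge> 0"
  shows "hilbert_schmidt_on_A2 \<alpha> (canonical_solution \<alpha>)"
  unfolding hilbert_schmidt_on_A2_def
proof (intro exI conjI allI)
  show "orthonormal_basis_A2 \<alpha> (monomial_basis \<alpha>)"
    using assms by (rule orthonormal_basis_A2_monomial_basis)
  show "L2 \<alpha> (canonical_solution \<alpha> (monomial_basis \<alpha> n))" for n
    using assms L2_cnj_mult_monomial_basis proj_cnj_basis_A2
    by (simp add: canonical_solution_monomial_basis L2_diff A2_def)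
  show "summable (\<lambda>n. (l2_norm \<alpha> (canonical_solution \<alpha> (monomial_basis \<alpha> n)))\<^sup>2)"
  proof (rule summableI_nonneg_bounded)
    show "(\<Sum>i<n. (l2_norm \<alpha> (canonical_solution \<alpha> (monomial_basis \<alpha> i)))\<^sup>2) \<le> 1" for n
      using moment_ratio_le_1[OF assms, of n] moment_ratio_def[of \<alpha> 0]
      by (simp add: l2_norm_canonical_solution_monomial_basis[OF assms] sum_lessThan_telescope)
  qed simp
qed

end
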